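(* Let $p\geq 3$ be a prime and let $H=(a_1,\dots,a_p)^\perp\subset\mathbb{R}^p$ be a hyperplane. Assume there exists $i$ such that $a_j\neq a_i$ for all $j\neq i$. Then $|H\cap S_pv|\leq (p-1)!$ for all $v\in\mathbb{R}^p$ with pairwise distinct coordinates.
   Context: $S_p$ acts on $\mathbb{R}^p$ by permuting coordinates and $S_pv$ is the orbit of $v$. $(a_1,\dots,a_p)^\perp$ denotes the hyperplane $\{x:\sum_m a_mx_m=0\}$ with $(a_1,\dots,a_p)\neq 0$. *)

theory Defs
  imports "HOL-Analysis.Analysis" "HOL-Computational_Algebra.Primes"
begin

text \<open>Vectors in R^p are represented as functions nat => real, only the coordinates
  0..p-1 being relevant.  Orbit of v under S_p acting by permuting coordinates;
  entries outside {..<p} are normalised to 0 so that distinct orbit points are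
  distinct functions.\<close>

definition perm_orbit :: "nat \<Rightarrow> (nat \<Rightarrow> real) \<Rightarrow> (nat \<Rightarrow> real) set" where
  "perm_orbit p v = {(\<lambda>m. if m < p then v (\<sigma> m) else 0) | \<sigma>. \<sigma> permutes {..<p}}"

definition hyperplane_perp :: "nat \<Rightarrow> (nat \<Rightarrow> real) \<Rightarrow> (nat \<Rightarrow> real) set" where
  "hyperplane_perp p a = {x. (\<Sum>m<p. a m * x m) = 0}"

end

theory Submission imports Defs begin

(* Fix i such that a i is attained only at i, and let m0 be the least entry of v.  Every
   orbit point lies on a chain starting at an orbit point z with z i = m0: from z, repeatedly
   swap coordinate i with the next larger entry among the coordinates j with a j > a i
   (first half of the chain) or with a j < a i (second half).  A swap of coordinates i and j
   changes <a, x> by (a j - a i) * (x i - x j), so <a, x> strictly decreases along the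
   first half and strictly increases along the second; a chain therefore meets the
   hyperplane at most once.  There are (p - 1)! starting points z. *)

definition lin_form :: "nat \<Rightarrow> (nat \<Rightarrow> real) \<Rightarrow> (nat \<Rightarrow> real) \<Rightarrow> real" where
  "lin_form p a x = (\<Sum>m<p. a m * x m)"

lemma hyperplane_perp_eq: "hyperplane_perp p a = {x. lin_form p a x = 0}"
  by (simp add: hyperplane_perp_def lin_form_def)

lemma lin_form_uminus: "lin_form p (- a) x = - lin_form p a x"
  by (simp add: lin_form_def sum_negf)

lemma lin_form_swap:
  assumes "i < p" "j < p" "i \<noteq> j"
  shows "lin_form p a (x \<circ> Transposition.transpose i j) = lin_form p a x + (a j - a i) * (x i - x j)"
proof -
  have "lin_form p a (x \<circ> Transposition.transpose i j) - lin_form p a x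
      = (\<Sum>m\<in>{i, j}. a m * ((x \<circ> Transposition.transpose i j) m - x m))"
    unfolding lin_form_def sum_subtractf[symmetric] right_diff_distrib[symmetric]
    using assms by (intro sum.mono_neutral_right) auto
  then show ?thesis
    using assms by (simp add: algebra_simps)
qed

lemma funpow_descent:
  fixes F :: "'a \<Rightarrow> 'b::order"
  assumes "\<And>x. F (f x) < F x \<or> f x = x"
  shows "F ((f ^^ k) x) < F x \<or> (f ^^ k) x = x"
proof (induction k)
  case 0
  then show ?case by simp
next
  case (Suc k)
  then show ?case
    using assms[of "(f ^^ k) x"] by (auto intro: order.strict_trans)
qed

lemma inj_on_funpow_descent:
  fixes F :: "'a \<Rightarrow> 'b::order"
  assumes "\<And>x. F (f x) < F x \<or> f x = x"
  shows "inj_on F (range (\<lambda>k. (f ^^ k) x))"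
proof -
  have eq: "(f ^^ l) x = (f ^^ k) x" if "k \<le> l" "F ((f ^^ l) x) = F ((f ^^ k) x)" for k l
  proof -
    have "(f ^^ l) x = (f ^^ (l - k)) ((f ^^ k) x)"
      using that(1) by (metis funpow_add le_add_diff_inverse2 o_apply)
    then show ?thesis
      using funpow_descent[OF assms, of "l - k" "(f ^^ k) x"] that(2) by auto
  qed
  show ?thesis
  proof (rule inj_onI, clarify)
    fix k l
    assume F_eq: "F ((f ^^ k) x) = F ((f ^^ l) x)"
    show "(f ^^ k) x = (f ^^ l) x"
      using eq[of k l] eq[of l k] F_eq nat_le_linear[of k l] by metis
  qed
qed

lemma inj_on_funpow_descent_ascent:
  fixes F :: "'a \<Rightarrow> 'b::ordered_ab_group_add"
  assumes desc: "\<And>x. F (f x) < F x \<or> f x = x"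
    and asc: "\<And>x. F x < F (g x) \<or> g x = x"
  shows "inj_on F (range (\<lambda>k. (f ^^ k) z) \<union> range (\<lambda>k. (g ^^ k) z))"
proof (rule inj_onI)
  have inj_f: "inj_on F (range (\<lambda>k. (f ^^ k) z))"
    using desc by (rule inj_on_funpow_descent)
  have "inj_on (uminus \<circ> F) (range (\<lambda>k. (g ^^ k) z))"
    by (rule inj_on_funpow_descent) (use asc in auto)
  then have inj_g: "inj_on F (range (\<lambda>k. (g ^^ k) z))"
    by (rule inj_on_imageI2)
  have below: "F x < F z \<or> x = z" if "x \<in> range (\<lambda>k. (f ^^ k) z)" for x
    using that funpow_descent[OF desc] by blast
  have above: "F z < F y \<or> y = z" if "y \<in> range (\<lambda>k. (g ^^ k) z)" for y
    using that funpow_descent[of "uminus \<circ> F" g] asc by fastforce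
  fix x y
  assume x: "x \<in> range (\<lambda>k. (f ^^ k) z) \<union> range (\<lambda>k. (g ^^ k) z)"
    and y: "y \<in> range (\<lambda>k. (f ^^ k) z) \<union> range (\<lambda>k. (g ^^ k) z)" and Fxy: "F x = F y"
  have cross: "u = w" if "u \<in> range (\<lambda>k. (f ^^ k) z)" "w \<in> range (\<lambda>k. (g ^^ k) z)" "F u = F w"
    for u w
    using below[OF that(1)] above[OF that(2)] that(3) by (auto dest: order.strict_trans)
  from x y show "x = y"
  proof (elim UnE)
    show "x = y" if "x \<in> range (\<lambda>k. (f ^^ k) z)" "y \<in> range (\<lambda>k. (f ^^ k) z)"
      using inj_f Fxy that by (rule inj_onD)
    show "x = y" if "x \<in> range (\<lambda>k. (g ^^ k) z)" "y \<in> range (\<lambda>k. (g ^^ k) z)"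
      using inj_g Fxy that by (rule inj_onD)
    show "x = y" if "x \<in> range (\<lambda>k. (f ^^ k) z)" "y \<in> range (\<lambda>k. (g ^^ k) z)"
      using cross[OF that Fxy] .
    show "x = y" if "x \<in> range (\<lambda>k. (g ^^ k) z)" "y \<in> range (\<lambda>k. (f ^^ k) z)"
      using cross[OF that(2,1) Fxy[symmetric]] by simp
  qed
qed

lemma perm_orbit_finite: "finite (perm_orbit p v)"
proof -
  have "perm_orbit p v = (\<lambda>\<sigma> m. if m < p then v (\<sigma> m) else 0) ` {\<sigma>. \<sigma> permutes {..<p}}"
    unfolding perm_orbit_def by auto
  then show ?thesis
    using finite_permutations[of "{..<p}"] by simp
qed

lemma perm_orbit_swap:
  assumes "x \<in> perm_orbit p v" "i < p" "j < p"
  shows "x \<circ> Transposition.transpose i j \<in> perm_orbit p v"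
proof -
  obtain \<sigma> where x: "x = (\<lambda>m. if m < p then v (\<sigma> m) else 0)" and \<sigma>: "\<sigma> permutes {..<p}"
    using assms(1) unfolding perm_orbit_def by auto
  have "\<sigma> \<circ> Transposition.transpose i j permutes {..<p}"
    using assms(2,3) by (intro permutes_compose[OF permutes_swap_id \<sigma>]) auto
  moreover have "x \<circ> Transposition.transpose i j
      = (\<lambda>m. if m < p then v ((\<sigma> \<circ> Transposition.transpose i j) m) else 0)"
    using assms(2,3) unfolding x by (auto simp: fun_eq_iff Transposition.transpose_def)
  ultimately show ?thesis
    unfolding perm_orbit_def by blast
qed

lemma perm_orbit_image:
  assumes "x \<in> perm_orbit p v"
  shows "x ` {..<p} = v ` {..<p}"
proof -
  obtain \<sigma> where x: "x = (\<lambda>m. if m < p then v (\<sigma> m) else 0)" and \<sigma>: "\<sigma> permutes {..<p}"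
    using assms unfolding perm_orbit_def by auto
  have "x ` {..<p} = v ` \<sigma> ` {..<p}"
    unfolding x by (auto simp: image_iff)
  then show ?thesis
    by (simp add: permutes_image[OF \<sigma>])
qed

lemma perm_orbit_inj_on:
  assumes "x \<in> perm_orbit p v" "inj_on v {..<p}"
  shows "inj_on x {..<p}"
  by (rule eq_card_imp_inj_on)
    (simp_all add: perm_orbit_image[OF assms(1)] card_image[OF assms(2)])

lemma card_perm_orbit_coord_eq_le:
  assumes "inj_on v {..<p}" "i < p"
  shows "card {z \<in> perm_orbit p v. z i = c} \<le> fact (p - 1)"
proof (cases "c \<in> v ` {..<p}")
  case False
  have "z i \<noteq> c" if "z \<in> perm_orbit p v" for z
    using False imageI[of i "{..<p}" z] perm_orbit_image[OF that] assms(2) by auto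
  then have empty: "{z \<in> perm_orbit p v. z i = c} = {}"
    by blast
  show ?thesis
    unfolding empty by simp
next
  case True
  then obtain k where k: "k < p" "v k = c" by auto
  define S where "S = {..<p} - {i}"
  have S: "insert i S = {..<p}" "card S = p - 1" "finite S"
    using assms(2) unfolding S_def by auto
  let ?g = "\<lambda>\<tau> m. if m < p then v ((Transposition.transpose i k \<circ> \<tau>) m) else 0"
  have "{z \<in> perm_orbit p v. z i = c} \<subseteq> ?g ` {\<tau>. \<tau> permutes S}"
  proof
    fix z
    assume "z \<in> {z \<in> perm_orbit p v. z i = c}"
    then obtain \<sigma> where z: "z = (\<lambda>m. if m < p then v (\<sigma> m) else 0)" "z i = c"
      and \<sigma>: "\<sigma> permutes insert i S"
      unfolding perm_orbit_def S by auto
    have "\<sigma> i = k"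
      using z assms k permutes_in_image[OF \<sigma>, of i] unfolding S inj_on_def by auto
    then have "z = ?g (Transposition.transpose i (\<sigma> i) \<circ> \<sigma>)"
      unfolding z(1) by (simp add: fun_eq_iff)
    moreover have "Transposition.transpose i (\<sigma> i) \<circ> \<sigma> permutes S"
      using \<sigma> by (rule permutes_insert_lemma)
    ultimately show "z \<in> ?g ` {\<tau>. \<tau> permutes S}"
      by blast
  qed
  then have "card {z \<in> perm_orbit p v. z i = c} \<le> card (?g ` {\<tau>. \<tau> permutes S})"
    using finite_permutations[of S] S by (intro card_mono) auto
  also have "\<dots> \<le> card {\<tau>. \<tau> permutes S}"
    using finite_permutations[of S] S by (intro card_image_le) auto
  also have "\<dots> = fact (p - 1)"
    using card_permutations[of S] S by auto
  finally show ?thesis .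
qed

definition heavier :: "nat \<Rightarrow> (nat \<Rightarrow> real) \<Rightarrow> nat \<Rightarrow> nat set" where
  "heavier p a i = {j. j < p \<and> a i < a j}"

definition raise_step :: "nat \<Rightarrow> (nat \<Rightarrow> real) \<Rightarrow> nat \<Rightarrow> (nat \<Rightarrow> real) \<Rightarrow> nat \<Rightarrow> real" where
  "raise_step p a i x =
     (if \<exists>j\<in>heavier p a i. x i < x j
      then x \<circ> Transposition.transpose i (arg_min_on x {j \<in> heavier p a i. x i < x j})
      else x)"

lemma finite_heavier: "finite (heavier p a i)"
  unfolding heavier_def by auto

lemma raise_step_eq_swap:
  assumes "\<exists>j\<in>heavier p a i. x i < x j"
  obtains j where "j \<in> heavier p a i" "x i < x j"
    "\<And>l. l \<in> heavier p a i \<Longrightarrow> x i < x l \<Longrightarrow> x j \<le> x l"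
    "raise_step p a i x = x \<circ> Transposition.transpose i j"
proof -
  let ?J = "{j \<in> heavier p a i. x i < x j}"
  have J: "finite ?J" "?J \<noteq> {}"
    using assms finite_heavier by auto
  show ?thesis
  proof (rule that)
    show "arg_min_on x ?J \<in> heavier p a i" "x i < x (arg_min_on x ?J)"
      using arg_min_if_finite(1)[OF J, of x] by auto
    show "x (arg_min_on x ?J) \<le> x l" if "l \<in> heavier p a i" "x i < x l" for l
      using arg_min_least[OF J, of l x] that by auto
    show "raise_step p a i x = x \<circ> Transposition.transpose i (arg_min_on x ?J)"
      using assms unfolding raise_step_def by simp
  qed
qed

lemma lin_form_raise_step:
  assumes "i < p"
  shows "lin_form p a (raise_step p a i x) < lin_form p a x \<or> raise_step p a i x = x"
proof (cases "\<exists>j\<in>heavier p a i. x i < x j")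
  case True
  then obtain j where j: "j \<in> heavier p a i" "x i < x j"
    and eq: "raise_step p a i x = x \<circ> Transposition.transpose i j"
    by (rule raise_step_eq_swap)
  have "j < p" "a i < a j"
    using j(1) by (auto simp: heavier_def)
  then have "lin_form p a (raise_step p a i x) = lin_form p a x + (a j - a i) * (x i - x j)"
    unfolding eq by (intro lin_form_swap assms) auto
  moreover have "(a j - a i) * (x i - x j) < 0"
    using \<open>a i < a j\<close> j(2) by (simp add: mult_pos_neg)
  ultimately show ?thesis
    by simp
next
  case False
  then show ?thesis
    by (simp add: raise_step_def)
qed

lemma raise_step_undo_swap:
  assumes "inj_on x {..<p}" "i < p" "j \<in> heavier p a i" "x j < x i"
    and below_max: "\<And>l. l \<in> heavier p a i \<Longrightarrow> x l < x i \<Longrightarrow> x l \<le> x j"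
  shows "raise_step p a i (x \<circ> Transposition.transpose i j) = x"
proof -
  let ?y = "x \<circ> Transposition.transpose i j"
  have j: "j < p" "j \<noteq> i"
    using assms(3) by (auto simp: heavier_def)
  have larger: "\<exists>l\<in>heavier p a i. ?y i < ?y l"
    using assms(3,4) by (intro bexI[of _ j]) auto
  obtain j' where j': "j' \<in> heavier p a i" "?y i < ?y j'"
    and least: "\<And>l. l \<in> heavier p a i \<Longrightarrow> ?y i < ?y l \<Longrightarrow> ?y j' \<le> ?y l"
    and eq: "raise_step p a i ?y = ?y \<circ> Transposition.transpose i j'"
    using raise_step_eq_swap[OF larger] by blast
  have "j' = j"
  proof (rule ccontr)
    assume "j' \<noteq> j"
    moreover have "j' \<noteq> i" "j' < p"
      using j'(1) by (auto simp: heavier_def)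
    ultimately have "x j < x j'" "x j' \<le> x i" "x j' \<noteq> x i"
      using j'(2) least[OF assms(3)] assms(1,2,4) j by (auto dest: inj_onD)
    then show False
      using below_max[OF j'(1)] by auto
  qed
  then show ?thesis
    using eq by (simp add: fun_eq_iff)
qed

(* Induction on the number of heavier coordinates below x i: swapping i with the largest of
   them gives a point with fewer such coordinates, from which raise_step leads back to x. *)
lemma raise_step_reaches_from_min:
  assumes v: "inj_on v {..<p}" and i: "i < p" and x: "x \<in> perm_orbit p v"
    and min: "x i = Min (v ` {..<p}) \<or> (\<exists>j\<in>heavier p a i. x j = Min (v ` {..<p}))"
  shows "\<exists>z\<in>perm_orbit p v. z i = Min (v ` {..<p}) \<and> x \<in> range (\<lambda>k. (raise_step p a i ^^ k) z)"
  using x min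
proof (induction "card {l \<in> heavier p a i. x l < x i}" arbitrary: x rule: less_induct)
  case less
  let ?m = "Min (v ` {..<p})"
  show ?case
  proof (cases "x i = ?m")
    case True
    then show ?thesis
      using less.prems(1) by (intro bexI[of _ x]) (auto intro: range_eqI[of _ _ 0])
  next
    case False
    then obtain j0 where j0: "j0 \<in> heavier p a i" "x j0 = ?m"
      using less.prems(2) by auto
    have "?m \<le> x i"
      using perm_orbit_image[OF less.prems(1)] i by (intro Min_le) auto
    define B where "B = {l \<in> heavier p a i. x l < x i}"
    have B: "finite B" "j0 \<in> B"
      using finite_heavier False j0 \<open>?m \<le> x i\<close> by (auto simp: B_def)
    obtain j where "j \<in> B" and j_max: "\<And>l. l \<in> B \<Longrightarrow> x l \<le> x j"
      using Max_in[of "x ` B"] Max_ge[of "x ` B"] B by fastforce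
    then have j: "j \<in> heavier p a i" "x j < x i" "j < p" "j \<noteq> i"
      by (auto simp: B_def heavier_def)
    define y where "y = x \<circ> Transposition.transpose i j"
    have y_orbit: "y \<in> perm_orbit p v"
      unfolding y_def using less.prems(1) i j(3) by (rule perm_orbit_swap)
    have "{l \<in> heavier p a i. y l < y i} \<subseteq> B - {j}"
      using j by (auto simp: y_def B_def heavier_def Transposition.transpose_def)
    then have fewer: "card {l \<in> heavier p a i. y l < y i} < card {l \<in> heavier p a i. x l < x i}"
      unfolding B_def[symmetric] using B \<open>j \<in> B\<close> by (meson card_Diff1_less card_mono finite_Diff le_less_trans)
    have "y i = ?m \<or> (\<exists>l\<in>heavier p a i. y l = ?m)"
    proof (cases "j = j0")
      case True
      then show ?thesis
        using j0 by (simp add: y_def)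
    next
      case False
      then have "y j0 = ?m"
        using j0 j by (auto simp: y_def heavier_def Transposition.transpose_def)
      then show ?thesis
        using j0(1) by blast
    qed
    then obtain z k where z: "z \<in> perm_orbit p v" "z i = ?m" "y = (raise_step p a i ^^ k) z"
      using less.hyps[OF fewer y_orbit] by blast
    have "raise_step p a i y = x"
      unfolding y_def using perm_orbit_inj_on[OF less.prems(1) v] i j(1,2)
      by (rule raise_step_undo_swap) (use j_max in \<open>auto simp: B_def\<close>)
    then have "x = (raise_step p a i ^^ Suc k) z"
      using z(3) by simp
    then show ?thesis
      using z(1,2) by blast
  qed
qed

definition raise_chain :: "nat \<Rightarrow> (nat \<Rightarrow> real) \<Rightarrow> nat \<Rightarrow> (nat \<Rightarrow> real) \<Rightarrow> (nat \<Rightarrow> real) set" where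
  "raise_chain p a i z =
     range (\<lambda>k. (raise_step p a i ^^ k) z) \<union> range (\<lambda>k. (raise_step p (- a) i ^^ k) z)"

lemma inj_on_lin_form_raise_chain:
  assumes "i < p"
  shows "inj_on (lin_form p a) (raise_chain p a i z)"
  unfolding raise_chain_def
proof (rule inj_on_funpow_descent_ascent)
  show "lin_form p a (raise_step p a i x) < lin_form p a x \<or> raise_step p a i x = x" for x
    using assms by (rule lin_form_raise_step)
  show "lin_form p a x < lin_form p a (raise_step p (- a) i x) \<or> raise_step p (- a) i x = x" for x
    using lin_form_raise_step[OF assms, of "- a" x] by (simp add: lin_form_uminus)
qed

lemma perm_orbit_in_raise_chain:
  assumes v: "inj_on v {..<p}" and i: "i < p" and a_i: "\<forall>j<p. j \<noteq> i \<longrightarrow> a j \<noteq> a i"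
    and x: "x \<in> perm_orbit p v"
  shows "\<exists>z\<in>perm_orbit p v. z i = Min (v ` {..<p}) \<and> x \<in> raise_chain p a i z"
proof -
  let ?m = "Min (v ` {..<p})"
  have "?m \<in> x ` {..<p}"
    unfolding perm_orbit_image[OF x] using i by (intro Min_in) auto
  then obtain j where j: "j < p" "x j = ?m"
    by auto
  consider "j = i \<or> a i < a j" | "a j < a i"
    using a_i j(1) by (cases "j = i") (auto simp: linorder_neq_iff)
  then show ?thesis
  proof cases
    case 1
    then have "x i = ?m \<or> (\<exists>j\<in>heavier p a i. x j = ?m)"
      using j by (auto simp: heavier_def)
    then show ?thesis
      using raise_step_reaches_from_min[OF v i x] unfolding raise_chain_def by blast
  next
    case 2
    then have "\<exists>j\<in>heavier p (- a) i. x j = ?m"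
      using j by (auto simp: heavier_def)
    then show ?thesis
      using raise_step_reaches_from_min[OF v i x, of "- a"] unfolding raise_chain_def by blast
  qed
qed

theorem corollary4p2:
  fixes p :: nat and a v :: "nat \<Rightarrow> real"
  assumes "prime p" and "p \<ge> 3"
    and "\<exists>m<p. a m \<noteq> 0"
    and "\<exists>i<p. \<forall>j<p. j \<noteq> i \<longrightarrow> a j \<noteq> a i"
    and "inj_on v {..<p}"
  shows "card (hyperplane_perp p a \<inter> perm_orbit p v) \<le> fact (p - 1)"
proof -
  obtain i where i: "i < p" and a_i: "\<forall>j<p. j \<noteq> i \<longrightarrow> a j \<noteq> a i"
    using assms(4) by blast
  define X where "X = hyperplane_perp p a \<inter> perm_orbit p v"
  define Z where "Z = {z \<in> perm_orbit p v. z i = Min (v ` {..<p})}"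
  have chain_card: "card (X \<inter> raise_chain p a i z) \<le> 1" for z
  proof -
    have "inj_on (lin_form p a) (X \<inter> raise_chain p a i z)"
      using inj_on_lin_form_raise_chain[OF i] by (rule inj_on_subset) auto
    then have "card (X \<inter> raise_chain p a i z) = card (lin_form p a ` (X \<inter> raise_chain p a i z))"
      by (rule card_image[symmetric])
    also have "\<dots> \<le> card {0 :: real}"
      by (intro card_mono) (auto simp: X_def hyperplane_perp_eq)
    finally show ?thesis
      by simp
  qed
  have "X = (\<Union>z\<in>Z. X \<inter> raise_chain p a i z)"
    using perm_orbit_in_raise_chain[OF assms(5) i a_i] unfolding X_def Z_def by blast
  then have "card X = card (\<Union>z\<in>Z. X \<inter> raise_chain p a i z)"
    by (rule arg_cong)
  also have "\<dots> \<le> (\<Sum>z\<in>Z. card (X \<inter> raise_chain p a i z))"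
    using perm_orbit_finite unfolding Z_def by (intro card_UN_le) simp
  also have "\<dots> \<le> (\<Sum>z\<in>Z. 1)"
    using chain_card by (intro sum_mono)
  also have "\<dots> = card Z"
    by simp
  also have "\<dots> \<le> fact (p - 1)"
    unfolding Z_def using assms(5) i by (rule card_perm_orbit_coord_eq_le)
  finally show ?thesis
    unfolding X_def .
qed

end
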